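(* Let $n\ge3$, $\kappa=\kappa_{12}\mathbf e_1\wedge\mathbf e_2$, so that the gyroscopic form is $\mathbf f=\frac{\kappa_{12}}{\varepsilon^2}d\gamma_1\wedge d\gamma_2$, and let the modified inertia operator be $\mathbf I(X\wedge Y)=\mathbb AX\wedge\mathbb AY$ with $\mathbb A=\operatorname{diag}(a_1,a_2,a_3,\dots,a_3)$, $a_i>0$. Let $\mathcal A(\gamma)=a_3+(a_1-a_3)\gamma_1^2+(a_2-a_3)\gamma_2^2$. Then $\mathcal N(\gamma)=\varepsilon\mathcal A(\gamma)^{\frac1{2\varepsilon}-1}$ is a Chaplygin multiplier: under the time substitution $d\tau=\mathcal N(\gamma)dt$ and the change of momenta $\tilde p=\mathcal N(\gamma)p$, the reduced system $$\dot\gamma=X_\gamma(\gamma,p),\qquad \dot p=\frac{1-\varepsilon}{\varepsilon^3}\mathbf I(\gamma\wedge X_\gamma)X_\gamma+\frac1{\varepsilon^2}\kappa X_\gamma+\mu\gamma$$ on $T^*S^{n-1}$ becomes the magnetic geodesic flow of the metric $$ds^2_{\mathbb A,\varepsilon}=(\gamma,\mathbb A\gamma)^{\frac1\varepsilon-2}\big((\mathbb Ad\gamma,d\gamma)(\mathbb A\gamma,\gamma)-(\mathbb A\gamma,d\gamma)^2\big)$$ on $S^{n-1}$ (Hamiltonian $h^*(\gamma,\tilde p)=\frac12\mathcal A(\gamma)^{1-\frac1\varepsilon}\langle\tilde p,\mathbb A^{-1}\tilde p\rangle$) with respect to the twisted symplectic form $$\Big(d\tilde p_1\wedge d\gamma_1+\dots+d\tilde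 p_n\wedge d\gamma_n+\frac{\kappa_{12}}{\varepsilon}\mathcal A(\gamma)^{\frac1{2\varepsilon}-1}d\gamma_1\wedge d\gamma_2\Big)\Big|_{T^*S^{n-1}}.$$
   Context: Model: balanced $n$-dimensional ball with gyroscope rolling without slipping and twisting over a fixed sphere; $\varepsilon=b/(b+a)$ or $b/(b-a)$ with $a,b>0$ the radii of the ball and the sphere. On $so(n)$, $\langle X,Y\rangle=-\frac12\operatorname{tr}(XY)$; on $\mathbb R^n$ the Euclidean product (also written $(\cdot,\cdot)$); $x\wedge y=xy^T-yx^T$; $\mathbf e_1,\dots,\mathbf e_n$ is the standard basis. $\mathbf I=\mathbb I+ma^2\mathrm{Id}$ is the modified inertia operator. $T^*S^{n-1}=\{(\gamma,p)\in\mathbb R^{2n}:\langle\gamma,\gamma\rangle=1,\langle\gamma,p\rangle=0\}$; $X_\gamma(\gamma,p)$ is the inverse of the Legendre map $\dot\gamma\mapsto p=-\frac1{\varepsilon^2}\mathbf I(\gamma\wedge\dot\gamma)\gamma$ on $TS^{n-1}$, $h=\frac12\langle X_\gamma,p\rangle$, and $\mu=\frac{\varepsilon-1}{\varepsilon^3}\langle\mathbf I(\gamma\wedge X_\gamma)X_\gamma,\gamma\rangle-2h+\frac1{\varepsilon^2}\langle X_\gamma,\kappa\gamma\rangle$. (Note $\mathcal A(\gamma)=\langle\mathbb A\gamma,\gamma\rangle$ on the unit sphere.) *)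

theory Defs
  imports "HOL-Analysis.Analysis"
begin

text \<open>Vectors of R^n are elements of real^'n (n = CARD('n)); the two distinguished
  basis directions e1, e2 are the coordinates i1, i2 (distinct).\<close>

definition wedge :: "real^'n \<Rightarrow> real^'n \<Rightarrow> real^'n^'n" where
  "wedge x y = (\<chi> i j. x$i * y$j - y$i * x$j)"

definition diagA :: "real \<Rightarrow> real \<Rightarrow> real \<Rightarrow> 'n \<Rightarrow> 'n \<Rightarrow> real^'n^'n" where
  "diagA a1 a2 a3 i1 i2 =
     (\<chi> i j. if i = j then (if i = i1 then a1 else if i = i2 then a2 else a3) else 0)"

definition calA :: "real \<Rightarrow> real \<Rightarrow> real \<Rightarrow> 'n \<Rightarrow> 'n \<Rightarrow> real^'n \<Rightarrow> real" where
  "calA a1 a2 a3 i1 i2 g = a3 + (a1 - a3) * (g$i1)^2 + (a2 - a3) * (g$i2)^2"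

definition kappa :: "real \<Rightarrow> 'n \<Rightarrow> 'n \<Rightarrow> real^'n^'n" where
  "kappa k12 i1 i2 = k12 *\<^sub>R wedge (axis i1 1) (axis i2 1)"

definition TstarS :: "((real^'n) \<times> (real^'n)) set" where
  "TstarS = {(g, p). g \<bullet> g = 1 \<and> g \<bullet> p = 0}"

definition tangent_TstarS :: "real^'n \<Rightarrow> real^'n \<Rightarrow> ((real^'n) \<times> (real^'n)) set" where
  "tangent_TstarS g p = {(dg, dp). g \<bullet> dg = 0 \<and> dg \<bullet> p + g \<bullet> dp = 0}"

definition legendre :: "real \<Rightarrow> (real^'n^'n \<Rightarrow> real^'n^'n) \<Rightarrow> real^'n \<Rightarrow> real^'n \<Rightarrow> real^'n" where
  "legendre eps I g v = - (1 / eps^2) *\<^sub>R (I (wedge g v) *v g)"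

definition Xg :: "real \<Rightarrow> (real^'n^'n \<Rightarrow> real^'n^'n) \<Rightarrow> real^'n \<Rightarrow> real^'n \<Rightarrow> real^'n" where
  "Xg eps I g p = (THE v. g \<bullet> v = 0 \<and> legendre eps I g v = p)"

definition hred :: "real \<Rightarrow> (real^'n^'n \<Rightarrow> real^'n^'n) \<Rightarrow> real^'n \<Rightarrow> real^'n \<Rightarrow> real" where
  "hred eps I g p = (1/2) * (Xg eps I g p \<bullet> p)"

definition mu :: "real \<Rightarrow> (real^'n^'n \<Rightarrow> real^'n^'n) \<Rightarrow> real^'n^'n \<Rightarrow> real^'n \<Rightarrow> real^'n \<Rightarrow> real" where
  "mu eps I K g p =
     (let X = Xg eps I g p in
        (eps - 1) / eps^3 * ((I (wedge g X) *v X) \<bullet> g) - 2 * hred eps I g p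
        + 1 / eps^2 * (X \<bullet> (K *v g)))"

definition pdot_red :: "real \<Rightarrow> (real^'n^'n \<Rightarrow> real^'n^'n) \<Rightarrow> real^'n^'n \<Rightarrow> real^'n \<Rightarrow> real^'n \<Rightarrow> real^'n" where
  "pdot_red eps I K g p =
     (let X = Xg eps I g p in
        ((1 - eps) / eps^3) *\<^sub>R (I (wedge g X) *v X) + (1 / eps^2) *\<^sub>R (K *v X)
        + mu eps I K g p *\<^sub>R g)"

definition Nmult :: "real \<Rightarrow> real \<Rightarrow> real \<Rightarrow> real \<Rightarrow> 'n \<Rightarrow> 'n \<Rightarrow> real^'n \<Rightarrow> real" where
  "Nmult eps a1 a2 a3 i1 i2 g = eps * (calA a1 a2 a3 i1 i2 g) powr (1 / (2 * eps) - 1)"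

definition hstar :: "real \<Rightarrow> real \<Rightarrow> real \<Rightarrow> real \<Rightarrow> 'n \<Rightarrow> 'n \<Rightarrow> real^'n \<Rightarrow> real^'n \<Rightarrow> real" where
  "hstar eps a1 a2 a3 i1 i2 g q =
     (1/2) * (calA a1 a2 a3 i1 i2 g) powr (1 - 1 / eps)
       * (q \<bullet> (matrix_inv (diagA a1 a2 a3 i1 i2) *v q))"

definition twisted_form :: "real \<Rightarrow> real \<Rightarrow> real \<Rightarrow> real \<Rightarrow> real \<Rightarrow> 'n \<Rightarrow> 'n \<Rightarrow> real^'n
      \<Rightarrow> ((real^'n) \<times> (real^'n)) \<Rightarrow> ((real^'n) \<times> (real^'n)) \<Rightarrow> real" where
  "twisted_form eps k12 a1 a2 a3 i1 i2 g Z W =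
     (snd Z \<bullet> fst W - snd W \<bullet> fst Z)
     + k12 / eps * (calA a1 a2 a3 i1 i2 g) powr (1 / (2 * eps) - 1)
         * ((fst Z)$i1 * (fst W)$i2 - (fst W)$i1 * (fst Z)$i2)"

definition metric :: "real \<Rightarrow> real^'n^'n \<Rightarrow> real^'n \<Rightarrow> real^'n \<Rightarrow> real^'n \<Rightarrow> real" where
  "metric eps A g v w =
     (g \<bullet> (A *v g)) powr (1 / eps - 2)
       * (((A *v v) \<bullet> w) * ((A *v g) \<bullet> g) - ((A *v g) \<bullet> v) * ((A *v g) \<bullet> w))"

end

theory Submission
  imports Defs
begin

text \<open>
  Since I(x \<and> y) = A x \<and> A y, the Legendre map inverts explicitly:
  X = eps^2 / calA(g) (A^-1 p - (g, A^-1 p) g), with calA(g) = (A g, g) on the sphere.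
  Hamilton's equations for h* are then checked pointwise. Along a tangent vector (W1, W2)
  of T*S^(n-1), the derivative of h* and minus the twisted form on the new velocity
  (g'/N, (N p)'/N) both equal
    (eps - 1) eps (A g, W1) (p, A^-1 p) / calA^2 + eps^2 (W2, A^-1 p) / (calA N).
  The exponent 1/(2 eps) - 1 in N is what makes this work: the gyroscopic term of the
  reduced equations, rescaled by N, cancels the magnetic part of the twisted form, and the
  terms in (g, A^-1 p)(p, W1) cancel among themselves. Since N does not vanish, the new
  time is injective on the interval and the new velocities follow from the chain rule.
  The metric part is Legendre duality: the covector dual to v is
  calA^(1/eps - 2) (calA A v - (A g, v) A g).
\<close>

lemma inj_on_if_nonzero_derivative:
  fixes f :: "real \<Rightarrow> real"
  assumes J: "is_interval J"
    and f': "\<And>s. s \<in> J \<Longrightarrow> (f has_real_derivative f' s) (at s)"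
    and nz: "\<And>s. s \<in> J \<Longrightarrow> f' s \<noteq> 0"
  shows "inj_on f J"
proof (rule linorder_inj_onI')
  fix x y assume xy: "x \<in> J" "y \<in> J" "x < y"
  have between: "z \<in> J" if "x \<le> z" "z \<le> y" for z
    using J xy that unfolding is_interval_1 by blast
  show "f x \<noteq> f y"
  proof
    assume "f x = f y"
    moreover have "continuous_on {x..y} f"
      using f' between by (intro continuous_at_imp_continuous_on) (metis DERIV_isCont atLeastAtMost_iff)
    moreover have "f differentiable (at z)" if "x < z" "z < y" for z
      using f' between that by (meson less_imp_le real_differentiable_def)
    ultimately obtain z where "x < z" "z < y" "DERIV f z :> 0"
      using Rolle[OF \<open>x < y\<close>] by blast
    then show False
      using f' nz between DERIV_unique by (metis less_imp_le)
  qed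
qed

lemma has_vector_derivative_reparametrization:
  fixes \<tau> :: "real \<Rightarrow> real" and f F :: "real \<Rightarrow> 'a::real_normed_vector"
  assumes J: "open J" "is_interval J" and t: "t \<in> J"
    and \<tau>': "\<And>s. s \<in> J \<Longrightarrow> (\<tau> has_real_derivative \<tau>' s) (at s)"
    and nz: "\<And>s. s \<in> J \<Longrightarrow> \<tau>' s \<noteq> 0"
    and F: "\<And>s. s \<in> J \<Longrightarrow> F (\<tau> s) = f s"
    and f': "(f has_vector_derivative v) (at t)"
  shows "(F has_vector_derivative v /\<^sub>R \<tau>' t) (at (\<tau> t))"
proof -
  define \<sigma> where "\<sigma> = inv_into J \<tau>"
  have inj: "inj_on \<tau> J"
    using inj_on_if_nonzero_derivative[OF J(2) \<tau>' nz] .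
  then have \<sigma>\<tau>: "\<And>s. s \<in> J \<Longrightarrow> \<sigma> (\<tau> s) = s"
    by (simp add: \<sigma>_def)
  have cont: "continuous_on J \<tau>"
    using \<tau>' by (intro continuous_at_imp_continuous_on) (auto dest: DERIV_isCont)
  have "(\<sigma> has_real_derivative inverse (\<tau>' t)) (at (\<tau> t))"
    unfolding has_field_derivative_def using nz[OF t] \<tau>'[OF t]
    by (intro has_derivative_inverse_strong[OF J(1) t cont \<sigma>\<tau>])
      (auto simp: has_field_derivative_def)
  then have \<sigma>': "(\<sigma> has_vector_derivative inverse (\<tau>' t)) (at (\<tau> t))"
    by (simp add: has_real_derivative_iff_has_vector_derivative)
  have "((f \<circ> \<sigma>) has_vector_derivative v /\<^sub>R \<tau>' t) (at (\<tau> t))"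
    using vector_diff_chain_at[OF \<sigma>'] f' \<sigma>\<tau>[OF t] by simp
  moreover have "open (\<tau> ` J)"
    using injective_into_1d_imp_open_map_UNIV[OF J(1) cont inj] by simp
  moreover have "(f \<circ> \<sigma>) y = F y" if "y \<in> \<tau> ` J" for y
    using that F \<sigma>\<tau> by auto
  ultimately show ?thesis
    using has_vector_derivative_transform_within_open t by blast
qed

lemma wedge_mult_vector: "wedge x y *v z = (y \<bullet> z) *\<^sub>R x - (x \<bullet> z) *\<^sub>R y"
  by (simp add: vec_eq_iff matrix_vector_mult_def wedge_def inner_vec_def
      algebra_simps sum_subtractf sum_distrib_left)

lemma matrix_inv_unique:
  fixes A :: "'a::semiring_1^'n^'m" and B :: "'a^'m^'n"
  assumes AB: "A ** B = mat 1" and BA: "B ** A = mat 1"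
  shows "matrix_inv A = B"
proof -
  let ?M = "matrix_inv A"
  have M: "A ** ?M = mat 1 \<and> ?M ** A = mat 1"
    unfolding matrix_inv_def by (rule someI[of _ B]) (use AB BA in simp)
  have "?M = ?M ** (A ** B)" by (simp add: AB)
  also have "\<dots> = (?M ** A) ** B" by (simp add: matrix_mul_assoc)
  finally show ?thesis using M by simp
qed

lemma diagA_mult_vector:
  "diagA a1 a2 a3 i1 i2 *v x = (\<chi> i. (if i = i1 then a1 else if i = i2 then a2 else a3) * x $ i)"
  by (simp add: vec_eq_iff matrix_vector_mult_def diagA_def if_distrib[of "\<lambda>c. c * _"]
      cong: if_cong)

lemma diagA_mult_diagA:
  "diagA a1 a2 a3 i1 i2 ** diagA b1 b2 b3 i1 i2 = diagA (a1 * b1) (a2 * b2) (a3 * b3) i1 i2"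
  by (rule matrix_eq[THEN iffD2])
    (simp add: matrix_vector_mul_assoc[symmetric] diagA_mult_vector vec_eq_iff)

lemma diagA_one: "diagA 1 1 1 i1 i2 = mat 1"
  by (simp add: diagA_def mat_def vec_eq_iff)

lemma matrix_inv_diagA:
  assumes "a1 \<noteq> 0" "a2 \<noteq> 0" "a3 \<noteq> 0"
  shows "matrix_inv (diagA a1 a2 a3 i1 i2) = diagA (inverse a1) (inverse a2) (inverse a3) i1 i2"
  by (rule matrix_inv_unique) (simp_all add: diagA_mult_diagA assms diagA_one)

lemma inner_diagA_commute:
  "(diagA a1 a2 a3 i1 i2 *v x) \<bullet> y = x \<bullet> (diagA a1 a2 a3 i1 i2 *v y)"
  by (simp add: diagA_mult_vector inner_vec_def mult_ac)

lemma inner_diagA: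
  assumes "i1 \<noteq> i2"
  shows "(diagA a1 a2 a3 i1 i2 *v x) \<bullet> y
           = a3 * (x \<bullet> y) + (a1 - a3) * (x $ i1 * y $ i1) + (a2 - a3) * (x $ i2 * y $ i2)"
proof -
  have "(diagA a1 a2 a3 i1 i2 *v x) \<bullet> y
      = (\<Sum>i\<in>UNIV. a3 * (x $ i * y $ i) + (if i = i1 then (a1 - a3) * (x $ i * y $ i) else 0)
          + (if i = i2 then (a2 - a3) * (x $ i * y $ i) else 0))"
    unfolding diagA_mult_vector inner_vec_def using assms by (intro sum.cong) (auto simp: algebra_simps)
  also have "\<dots> = a3 * (x \<bullet> y) + (a1 - a3) * (x $ i1 * y $ i1) + (a2 - a3) * (x $ i2 * y $ i2)"
    by (simp add: sum.distrib inner_vec_def sum_distrib_left)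
  finally show ?thesis .
qed

lemma inner_kappa_mult_vector:
  "(kappa k12 i1 i2 *v x) \<bullet> y = k12 * (x $ i2 * y $ i1 - x $ i1 * y $ i2)"
  by (simp add: kappa_def scaleR_matrix_vector_assoc[symmetric] wedge_mult_vector
      inner_axis' inner_axis algebra_simps)

lemma legendre_wedge_inertia:
  assumes "\<And>x y. I (wedge x y) = wedge (D *v x) (D *v y)"
  shows "legendre eps I g v
           = (1 / eps^2) *\<^sub>R ((g \<bullet> (D *v g)) *\<^sub>R (D *v v) - ((D *v v) \<bullet> g) *\<^sub>R (D *v g))"
  by (simp add: legendre_def assms wedge_mult_vector inner_commute algebra_simps)

lemma Xg_wedge_inertia:
  fixes D M :: "real^'n^'n"
  assumes inertia: "\<And>x y. I (wedge x y) = wedge (D *v x) (D *v y)"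
    and MD: "\<And>x. M *v (D *v x) = x" and DM: "\<And>x. D *v (M *v x) = x"
    and eps: "eps \<noteq> 0" and g: "g \<bullet> g = 1" "g \<bullet> p = 0" and a: "g \<bullet> (D *v g) \<noteq> 0"
  shows "Xg eps I g p = (eps^2 / (g \<bullet> (D *v g))) *\<^sub>R (M *v p - (g \<bullet> (M *v p)) *\<^sub>R g)"
proof -
  define a where "a = g \<bullet> (D *v g)"
  define \<beta> where "\<beta> = g \<bullet> (M *v p)"
  define v0 where "v0 = (eps^2 / a) *\<^sub>R (M *v p - \<beta> *\<^sub>R g)"
  have a0: "a \<noteq> 0" using a by (simp add: a_def)
  have L: "legendre eps I g v = (1 / eps^2) *\<^sub>R (a *\<^sub>R (D *v v) - ((D *v v) \<bullet> g) *\<^sub>R (D *v g))" for v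
    unfolding a_def by (rule legendre_wedge_inertia[OF inertia])
  have v0_orth: "g \<bullet> v0 = 0"
    using a0 by (simp add: v0_def inner_diff_right g \<beta>_def)
  have v0_legendre: "legendre eps I g v0 = p"
  proof -
    have Dv0: "D *v v0 = (eps^2 / a) *\<^sub>R (p - \<beta> *\<^sub>R (D *v g))"
      by (simp add: v0_def DM algebra_simps)
    have "(D *v v0) \<bullet> g = g \<bullet> (D *v v0)" by (simp add: inner_commute)
    also have "\<dots> = (eps^2 / a) * (g \<bullet> p) - (eps^2 / a) * \<beta> * a"
      using a0 by (simp add: Dv0 inner_diff_right a_def field_simps)
    finally have Dv0g: "(D *v v0) \<bullet> g = - (eps^2 * \<beta>)"
      using a0 g by simp
    have Dgg: "(D *v g) \<bullet> g = a" and pg: "p \<bullet> g = 0"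
      using g by (simp_all add: a_def inner_commute)
    show ?thesis
      using a0 eps by (simp add: L Dv0g) (simp add: Dv0 algebra_simps Dgg pg)
  qed
  have legendre_unique: "v = v0" if v: "g \<bullet> v = 0" "legendre eps I g v = p" for v
  proof -
    define s where "s = (D *v v) \<bullet> g"
    have "M *v p = M *v legendre eps I g v" using v by simp
    also have "\<dots> = (1 / eps^2) *\<^sub>R (a *\<^sub>R v - s *\<^sub>R g)"
      unfolding L s_def[symmetric] by (simp add: algebra_simps MD)
    finally have Mp: "M *v p = (1 / eps^2) *\<^sub>R (a *\<^sub>R v - s *\<^sub>R g)" .
    have "\<beta> = - s / eps^2"
      using v by (simp add: \<beta>_def Mp inner_diff_right g)
    then show "v = v0"
      using a0 eps by (simp add: v0_def Mp algebra_simps)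
  qed
  show ?thesis
    unfolding Xg_def a_def[symmetric] \<beta>_def[symmetric] v0_def[symmetric]
    by (rule the_equality) (use v0_orth v0_legendre legendre_unique in blast)+
qed

lemma inner_pdot_red_tangent:
  fixes eps :: real and g p w :: "real^'n"
  assumes inertia: "\<And>x y. I (wedge x y) = wedge (D *v x) (D *v y)" and w: "g \<bullet> w = 0"
  defines "X \<equiv> Xg eps I g p"
  shows "pdot_red eps I K g p \<bullet> w
           = (1 - eps) / eps^3 * (((D *v g) \<bullet> w) * ((D *v X) \<bullet> X) - ((D *v X) \<bullet> w) * ((D *v g) \<bullet> X))
             + 1 / eps^2 * ((K *v X) \<bullet> w)"
  using w unfolding pdot_red_def Let_def X_def[symmetric]
  by (simp add: inertia wedge_mult_vector inner_commute algebra_simps)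

lemma eq_if_inner_eq_on_orthogonal_complement:
  fixes q m g :: "'a::real_inner"
  assumes "q \<bullet> g = 0" "m \<bullet> g = 0" and "\<And>w. w \<bullet> g = 0 \<Longrightarrow> q \<bullet> w = m \<bullet> w"
  shows "q = m"
proof -
  have "q \<bullet> (q - m) = m \<bullet> (q - m)"
    using assms by (simp add: inner_diff_left)
  then have "(q - m) \<bullet> (q - m) = 0"
    by (simp add: inner_diff_left)
  then show ?thesis by simp
qed

lemma sq_coordinates_le_inner_self:
  fixes g :: "real^'n"
  assumes "i1 \<noteq> i2"
  shows "(g $ i1)^2 + (g $ i2)^2 \<le> g \<bullet> g"
proof -
  have "(g $ i1)^2 + (g $ i2)^2 = (\<Sum>i\<in>{i1, i2}. (g $ i)^2)"
    using assms by simp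
  also have "\<dots> \<le> (\<Sum>i\<in>UNIV. (g $ i)^2)"
    by (rule sum_mono2) auto
  finally show ?thesis
    by (simp add: inner_vec_def power2_eq_square)
qed

locale diag_inertia =
  fixes a1 a2 a3 :: real and i1 i2 :: "'n::finite"
  assumes axes_distinct: "i1 \<noteq> i2" and coeffs_pos: "a1 > 0" "a2 > 0" "a3 > 0"
begin

abbreviation Amat :: "real^'n^'n" where "Amat \<equiv> diagA a1 a2 a3 i1 i2"

abbreviation \<A> :: "real^'n \<Rightarrow> real" where "\<A> \<equiv> calA a1 a2 a3 i1 i2"

lemma matrix_inv_Amat: "matrix_inv Amat = diagA (inverse a1) (inverse a2) (inverse a3) i1 i2"
  using coeffs_pos by (simp add: matrix_inv_diagA)

lemma matrix_inv_Amat_cancel: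
  "matrix_inv Amat *v (Amat *v x) = x" "Amat *v (matrix_inv Amat *v x) = x"
  using coeffs_pos
  by (simp_all add: matrix_inv_Amat matrix_vector_mul_assoc diagA_mult_diagA diagA_one)

lemma inner_matrix_inv_Amat_commute:
  "(matrix_inv Amat *v x) \<bullet> y = x \<bullet> (matrix_inv Amat *v y)"
  by (simp add: matrix_inv_Amat inner_diagA_commute)

lemma calA_eq_inner: "g \<bullet> g = 1 \<Longrightarrow> \<A> g = g \<bullet> (Amat *v g)"
  using inner_diagA[OF axes_distinct, of a1 a2 a3 g g]
  by (simp add: calA_def inner_commute power2_eq_square)

lemma calA_pos:
  assumes "g \<bullet> g = 1"
  shows "\<A> g > 0"
proof -
  define m where "m = min a1 (min a2 a3)"
  have "m > 0" using coeffs_pos by (simp add: m_def)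
  have "\<A> g = a3 * (1 - (g $ i1)^2 - (g $ i2)^2) + a1 * (g $ i1)^2 + a2 * (g $ i2)^2"
    by (simp add: calA_def algebra_simps)
  also have "\<dots> \<ge> m * (1 - (g $ i1)^2 - (g $ i2)^2) + m * (g $ i1)^2 + m * (g $ i2)^2"
    using sq_coordinates_le_inner_self[OF axes_distinct, of g] assms
    by (intro add_mono mult_right_mono) (auto simp: m_def)
  finally show ?thesis
    using \<open>m > 0\<close> by (simp add: algebra_simps)
qed

lemma hstar_eq_half_metric:
  assumes g: "g \<bullet> g = 1" "g \<bullet> v = 0" and q: "q \<bullet> g = 0"
    and dual: "\<forall>w. w \<bullet> g = 0 \<longrightarrow> q \<bullet> w = metric eps Amat g v w"
  shows "hstar eps a1 a2 a3 i1 i2 g q = metric eps Amat g v v / 2"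
proof -
  define a where "a = \<A> g"
  have a: "a = g \<bullet> (Amat *v g)" "a > 0"
    using calA_eq_inner[OF g(1)] calA_pos[OF g(1)] by (simp_all add: a_def)
  define c where "c = a powr (1 / eps - 2)"
  define s where "s = (Amat *v g) \<bullet> v"
  define m where "m = c *\<^sub>R (a *\<^sub>R (Amat *v v) - s *\<^sub>R (Amat *v g))"
  have Dgg: "(Amat *v g) \<bullet> g = a"
    by (simp add: a(1) inner_commute)
  have Dvg: "(Amat *v v) \<bullet> g = s"
    unfolding s_def by (metis inner_commute inner_diagA_commute)
  have metric_m: "metric eps Amat g v w = m \<bullet> w" for w
    by (simp add: metric_def m_def c_def s_def Dgg algebra_simps flip: a(1))
  have "m \<bullet> g = 0"
    by (simp add: m_def inner_diff_left Dgg Dvg)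
  then have qm: "q = m"
    using dual by (intro eq_if_inner_eq_on_orthogonal_complement[OF q]) (simp_all add: metric_m)
  have Mm: "matrix_inv Amat *v m = c *\<^sub>R (a *\<^sub>R v - s *\<^sub>R g)"
    by (simp add: m_def algebra_simps matrix_inv_Amat_cancel)
  have qMq: "q \<bullet> (matrix_inv Amat *v q) = c^2 * a * (a * ((Amat *v v) \<bullet> v) - s^2)"
    unfolding qm Mm
    by (simp add: m_def Dgg Dvg g power2_eq_square algebra_simps)
      (simp add: inner_diagA_commute s_def algebra_simps)
  have metric_vv: "metric eps Amat g v v = c * (a * ((Amat *v v) \<bullet> v) - s^2)"
    by (simp add: metric_m m_def power2_eq_square algebra_simps s_def)
  have powers: "a powr (1 - 1 / eps) * c * a = 1"
  proof -
    have "a powr (1 - 1 / eps) * c = a powr (- 1)"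
      by (simp add: c_def flip: powr_add)
    then show ?thesis
      using a(2) by (simp add: powr_minus)
  qed
  have "hstar eps a1 a2 a3 i1 i2 g q
          = 1 / 2 * (a powr (1 - 1 / eps) * c * a) * (c * (a * ((Amat *v v) \<bullet> v) - s^2))"
    by (simp add: hstar_def qMq power2_eq_square mult_ac flip: a_def)
  also have "\<dots> = metric eps Amat g v v / 2"
    using powers metric_vv by simp
  finally show ?thesis .
qed

lemma has_derivative_calA:
  "(\<A> has_derivative (\<lambda>v. 2 * ((Amat *v g) \<bullet> v - a3 * (g \<bullet> v)))) (at g)"
proof -
  have coord: "((\<lambda>x. x $ i) has_derivative (\<lambda>x. x $ i)) (at g)" for i :: 'n
    by (rule bounded_linear_imp_has_derivative) (rule bounded_linear_vec_nth)
  show ?thesis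
    unfolding calA_def
    by (auto intro!: derivative_eq_intros coord simp: inner_diagA[OF axes_distinct] algebra_simps)
qed

lemma calA_has_real_derivative:
  assumes "(\<gamma> has_vector_derivative X) (at t)"
  shows "((\<lambda>s. \<A> (\<gamma> s)) has_real_derivative 2 * ((Amat *v \<gamma> t) \<bullet> X - a3 * (\<gamma> t \<bullet> X))) (at t)"
  using has_derivative_compose[OF assms[unfolded has_vector_derivative_def] has_derivative_calA]
  unfolding has_field_derivative_def
  by (rule has_derivative_eq_rhs) (auto simp: algebra_simps)

lemma hstar_line_derivative:
  assumes "\<A> g > 0"
  shows "((\<lambda>r. hstar eps a1 a2 a3 i1 i2 (g + r *\<^sub>R W1) (q + r *\<^sub>R W2)) has_real_derivative
           (1 - 1 / eps) * \<A> g powr (- 1 / eps) * ((Amat *v g) \<bullet> W1 - a3 * (g \<bullet> W1))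
             * (q \<bullet> (matrix_inv Amat *v q))
           + \<A> g powr (1 - 1 / eps) * (W2 \<bullet> (matrix_inv Amat *v q))) (at 0)"
proof -
  let ?M = "matrix_inv Amat"
  have exponent: "1 - 1 / eps - of_nat 1 = - 1 / eps" by simp
  have line: "((\<lambda>r. g + r *\<^sub>R W1) has_vector_derivative W1) (at 0)"
    by (auto intro!: derivative_eq_intros)
  have powr_deriv: "((\<lambda>r. \<A> (g + r *\<^sub>R W1) powr (1 - 1 / eps)) has_real_derivative
      (1 - 1 / eps) * \<A> g powr (- 1 / eps) * (2 * ((Amat *v g) \<bullet> W1 - a3 * (g \<bullet> W1)))) (at 0)"
    using DERIV_fun_powr[OF calA_has_real_derivative[OF line], of "1 - 1 / eps"]
    by (simp only: scaleR_zero_left add.right_neutral assms exponent)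
  have "q \<bullet> (?M *v W2) = W2 \<bullet> (?M *v q)"
    by (metis inner_commute inner_matrix_inv_Amat_commute)
  then have "(q + r *\<^sub>R W2) \<bullet> (?M *v (q + r *\<^sub>R W2))
          = q \<bullet> (?M *v q) + 2 * r * (W2 \<bullet> (?M *v q)) + r^2 * (W2 \<bullet> (?M *v W2))" for r
    by (simp add: power2_eq_square algebra_simps)
  moreover have "((\<lambda>r. q \<bullet> (?M *v q) + 2 * r * (W2 \<bullet> (?M *v q)) + r^2 * (W2 \<bullet> (?M *v W2)))
                   has_real_derivative 2 * (W2 \<bullet> (?M *v q))) (at 0)"
    by (auto intro!: derivative_eq_intros)
  ultimately have quad_deriv: "((\<lambda>r. (q + r *\<^sub>R W2) \<bullet> (?M *v (q + r *\<^sub>R W2)))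
                   has_real_derivative 2 * (W2 \<bullet> (?M *v q))) (at 0)"
    by simp
  show ?thesis
    unfolding hstar_def mult.assoc
    by (rule DERIV_cong[OF DERIV_cmult[OF DERIV_mult[OF powr_deriv quad_deriv]]])
      (simp add: algebra_simps)
qed

lemma Nmult_ne_zero:
  assumes "eps \<noteq> 0" "g \<bullet> g = 1"
  shows "Nmult eps a1 a2 a3 i1 i2 g \<noteq> 0"
  using assms calA_pos[OF assms(2)] by (simp add: Nmult_def)

definition Nmult_deriv :: "real \<Rightarrow> real^'n \<Rightarrow> real^'n \<Rightarrow> real" where
  "Nmult_deriv eps g v = eps * (1 / (2 * eps) - 1) * \<A> g powr (1 / (2 * eps) - 2) * (2 * ((Amat *v g) \<bullet> v))"

lemma Nmult_has_real_derivative: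
  assumes "(\<gamma> has_vector_derivative X) (at t)" "\<gamma> t \<bullet> \<gamma> t = 1" "\<gamma> t \<bullet> X = 0"
  shows "((\<lambda>s. Nmult eps a1 a2 a3 i1 i2 (\<gamma> s)) has_real_derivative Nmult_deriv eps (\<gamma> t) X) (at t)"
proof -
  have exponent: "1 / (2 * eps) - 1 - of_nat 1 = 1 / (2 * eps) - 2" by simp
  have "((\<lambda>s. eps * \<A> (\<gamma> s) powr (1 / (2 * eps) - 1)) has_real_derivative
          eps * ((1 / (2 * eps) - 1) * \<A> (\<gamma> t) powr (1 / (2 * eps) - 1 - of_nat 1)
            * (2 * ((Amat *v \<gamma> t) \<bullet> X - a3 * (\<gamma> t \<bullet> X))))) (at t)"
    by (intro DERIV_cmult DERIV_fun_powr calA_has_real_derivative assms(1) calA_pos assms(2))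
  then show ?thesis
    unfolding exponent Nmult_def Nmult_deriv_def using assms(3) by (simp add: mult.assoc)
qed

lemma Xg_Amat:
  assumes eps: "eps \<noteq> 0" and inertia: "\<And>x y. I (wedge x y) = wedge (Amat *v x) (Amat *v y)"
    and g: "g \<bullet> g = 1" "g \<bullet> p = 0"
  shows "Xg eps I g p
           = (eps^2 / \<A> g) *\<^sub>R (matrix_inv Amat *v p - (g \<bullet> (matrix_inv Amat *v p)) *\<^sub>R g)"
  using Xg_wedge_inertia[OF inertia matrix_inv_Amat_cancel eps g]
    calA_pos[OF g(1)]
  by (simp add: calA_eq_inner[OF g(1)])

lemma inner_Xg_Amat:
  assumes "eps \<noteq> 0" "\<And>x y. I (wedge x y) = wedge (Amat *v x) (Amat *v y)"
    and "g \<bullet> g = 1" "g \<bullet> p = 0"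
  shows "g \<bullet> Xg eps I g p = 0"
  using assms by (simp add: Xg_Amat inner_diff_right)

lemma Amat_Xg:
  assumes "eps \<noteq> 0" "\<And>x y. I (wedge x y) = wedge (Amat *v x) (Amat *v y)"
    and "g \<bullet> g = 1" "g \<bullet> p = 0"
  shows "Amat *v Xg eps I g p = (eps^2 / \<A> g) *\<^sub>R (p - (g \<bullet> (matrix_inv Amat *v p)) *\<^sub>R (Amat *v g))"
  using assms by (simp add: Xg_Amat matrix_inv_Amat_cancel algebra_simps)

lemma inner_Amat_Xg:
  assumes "eps \<noteq> 0" "\<And>x y. I (wedge x y) = wedge (Amat *v x) (Amat *v y)"
    and g: "g \<bullet> g = 1" "g \<bullet> p = 0"
  shows "(Amat *v g) \<bullet> Xg eps I g p = - (eps^2 * (g \<bullet> (matrix_inv Amat *v p)))"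
proof -
  have "(Amat *v g) \<bullet> Xg eps I g p = g \<bullet> (Amat *v Xg eps I g p)"
    by (rule inner_diagA_commute)
  also have "\<dots> = - (eps^2 * (g \<bullet> (matrix_inv Amat *v p)))"
    using calA_pos[OF g(1)] calA_eq_inner[OF g(1)]
    by (simp add: Amat_Xg[OF assms] inner_diff_right g(2))
  finally show ?thesis .
qed

lemma Nmult_deriv_Xg_div_Nmult:
  assumes eps: "eps \<noteq> 0" and inertia: "\<And>x y. I (wedge x y) = wedge (Amat *v x) (Amat *v y)"
    and g: "g \<bullet> g = 1" "g \<bullet> p = 0"
  shows "Nmult_deriv eps g (Xg eps I g p) / Nmult eps a1 a2 a3 i1 i2 g
           = eps * (g \<bullet> (matrix_inv Amat *v p)) * (2 * eps - 1) / \<A> g"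
proof -
  define a where "a = \<A> g"
  have a: "a > 0" using calA_pos[OF g(1)] by (simp add: a_def)
  have "a powr (1 / (2 * eps) - 2) = a powr (1 / (2 * eps) - 1) / a"
    using a by (simp add: powr_diff power2_eq_square)
  then have N': "Nmult_deriv eps g (Xg eps I g p)
      = Nmult eps a1 a2 a3 i1 i2 g * (1 / (2 * eps) - 1) * (- 2 * eps^2 * (g \<bullet> (matrix_inv Amat *v p))) / a"
    by (simp add: Nmult_deriv_def Nmult_def inner_Amat_Xg[OF eps inertia g] flip: a_def)
  show ?thesis
    unfolding N' using Nmult_ne_zero[OF eps g(1)] eps a
    by (simp add: field_simps power2_eq_square flip: a_def)
qed

lemma twisted_form_rescaled_reduced_field:
  fixes eps k12 N' :: real and I :: "real^'n^'n \<Rightarrow> real^'n^'n" and g p W1 W2 :: "real^'n"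
  defines "X \<equiv> Xg eps I g p" and "N \<equiv> Nmult eps a1 a2 a3 i1 i2 g"
  assumes eps: "eps \<noteq> 0" and inertia: "\<And>x y. I (wedge x y) = wedge (Amat *v x) (Amat *v y)"
    and g: "g \<bullet> g = 1" and W1: "g \<bullet> W1 = 0"
  shows "twisted_form eps k12 a1 a2 a3 i1 i2 g
             (X /\<^sub>R N, (N *\<^sub>R pdot_red eps I (kappa k12 i1 i2) g p + N' *\<^sub>R p) /\<^sub>R N) (W1, W2)
      = (1 - eps) / eps^3 * (((Amat *v g) \<bullet> W1) * ((Amat *v X) \<bullet> X) - ((Amat *v X) \<bullet> W1) * ((Amat *v g) \<bullet> X))
        + N' / N * (p \<bullet> W1) - (W2 \<bullet> X) / N"
proof -
  have N: "N \<noteq> 0"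
    using Nmult_ne_zero[OF eps g] by (simp add: N_def)
  \<comment> \<open>this is where the exponent of N is needed: the gyroscopic terms cancel\<close>
  have magnetic: "k12 / eps * \<A> g powr (1 / (2 * eps) - 1) = k12 / eps^2 * N"
    using eps by (simp add: N_def Nmult_def power2_eq_square)
  show ?thesis
    unfolding twisted_form_def fst_conv snd_conv magnetic
    using inner_pdot_red_tangent[OF inertia W1] N eps
    by (simp add: inner_kappa_mult_vector inner_add_left field_simps flip: X_def)
qed

lemma neg_twisted_form_reduced_field:
  fixes eps k12 :: real and I :: "real^'n^'n \<Rightarrow> real^'n^'n" and g p W1 W2 :: "real^'n"
  defines "X \<equiv> Xg eps I g p" and "N \<equiv> Nmult eps a1 a2 a3 i1 i2 g"
  defines "N' \<equiv> Nmult_deriv eps g X"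
  assumes eps: "eps \<noteq> 0" and inertia: "\<And>x y. I (wedge x y) = wedge (Amat *v x) (Amat *v y)"
    and g: "g \<bullet> g = 1" "g \<bullet> p = 0" and W: "g \<bullet> W1 = 0" "W1 \<bullet> (N *\<^sub>R p) + g \<bullet> W2 = 0"
  shows "- twisted_form eps k12 a1 a2 a3 i1 i2 g
             (X /\<^sub>R N, (N *\<^sub>R pdot_red eps I (kappa k12 i1 i2) g p + N' *\<^sub>R p) /\<^sub>R N) (W1, W2)
         = (eps - 1) * eps * ((Amat *v g) \<bullet> W1) * (p \<bullet> (matrix_inv Amat *v p)) / \<A> g ^ 2
           + eps^2 * (W2 \<bullet> (matrix_inv Amat *v p)) / (\<A> g * N)"
proof -
  let ?M = "matrix_inv Amat"
  define a where "a = \<A> g"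
  define \<beta> where "\<beta> = g \<bullet> (?M *v p)"
  define \<sigma> where "\<sigma> = p \<bullet> (?M *v p)"
  define w where "w = (Amat *v g) \<bullet> W1"
  define \<pi> where "\<pi> = p \<bullet> W1"
  define \<rho> where "\<rho> = W2 \<bullet> (?M *v p)"
  have a: "a > 0"
    using calA_pos[OF g(1)] by (simp add: a_def)
  have N: "N \<noteq> 0"
    using Nmult_ne_zero[OF eps g(1)] by (simp add: N_def)
  have pg: "p \<bullet> g = 0" using g(2) by (simp add: inner_commute)
  have X: "X = (eps^2 / a) *\<^sub>R (?M *v p - \<beta> *\<^sub>R g)"
    unfolding X_def a_def \<beta>_def by (rule Xg_Amat[OF eps inertia g])
  have AX: "Amat *v X = (eps^2 / a) *\<^sub>R (p - \<beta> *\<^sub>R (Amat *v g))"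
    unfolding X_def a_def \<beta>_def by (rule Amat_Xg[OF eps inertia g])
  have gAX: "(Amat *v g) \<bullet> X = - (eps^2 * \<beta>)"
    unfolding X_def \<beta>_def by (rule inner_Amat_Xg[OF eps inertia g])
  have pX: "p \<bullet> X = eps^2 * \<sigma> / a"
    by (simp add: X inner_diff_right \<sigma>_def pg)
  have AXX: "(Amat *v X) \<bullet> X = eps^4 / a^2 * (\<sigma> + a * \<beta>^2)"
    unfolding AX using a by (simp add: inner_diff_left pX gAX power2_eq_square power4_eq_xxxx field_simps)
  have AXW: "(Amat *v X) \<bullet> W1 = (eps^2 / a) * (\<pi> - \<beta> * w)"
    by (simp add: AX \<pi>_def w_def algebra_simps)
  have W2g: "W2 \<bullet> g = - (N * \<pi>)"
    using W(2) by (simp add: \<pi>_def inner_commute)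
  have W2X: "W2 \<bullet> X = (eps^2 / a) * (\<rho> + \<beta> * N * \<pi>)"
    by (simp add: X \<rho>_def W2g algebra_simps)
  have N': "N' / N = eps * \<beta> * (2 * eps - 1) / a"
    unfolding N'_def N_def X_def a_def \<beta>_def by (rule Nmult_deriv_Xg_div_Nmult[OF eps inertia g])
  have "twisted_form eps k12 a1 a2 a3 i1 i2 g
             (X /\<^sub>R N, (N *\<^sub>R pdot_red eps I (kappa k12 i1 i2) g p + N' *\<^sub>R p) /\<^sub>R N) (W1, W2)
      = (1 - eps) / eps^3 * (w * ((Amat *v X) \<bullet> X) - ((Amat *v X) \<bullet> W1) * ((Amat *v g) \<bullet> X))
        + N' / N * \<pi> - (W2 \<bullet> X) / N"
    unfolding X_def N_def w_def \<pi>_def by (rule twisted_form_rescaled_reduced_field[OF eps inertia g(1) W(1)])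
  also have "\<dots> = (1 - eps) * eps * w * \<sigma> / a^2 - eps^2 * \<rho> / (a * N)"
  proof -
    have bracket: "w * ((Amat *v X) \<bullet> X) - ((Amat *v X) \<bullet> W1) * ((Amat *v g) \<bullet> X)
            = eps^4 / a^2 * (w * \<sigma> + a * \<beta> * \<pi>)"
      using a by (simp add: AXX AXW gAX field_simps power2_eq_square power4_eq_xxxx)
    show ?thesis
      unfolding bracket N' W2X
      using N a eps by (simp add: field_simps power2_eq_square power4_eq_xxxx power3_eq_cube)
  qed
  finally have tf: "twisted_form eps k12 a1 a2 a3 i1 i2 g
             (X /\<^sub>R N, (N *\<^sub>R pdot_red eps I (kappa k12 i1 i2) g p + N' *\<^sub>R p) /\<^sub>R N) (W1, W2)
      = (1 - eps) * eps * w * \<sigma> / a^2 - eps^2 * \<rho> / (a * N)" .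
  show ?thesis
    unfolding tf using a N by (simp add: a_def \<sigma>_def \<rho>_def w_def field_simps)
qed

lemma hstar_derivative_eq_neg_twisted_form:
  fixes eps k12 :: real and I :: "real^'n^'n \<Rightarrow> real^'n^'n" and g p W1 W2 :: "real^'n"
  defines "X \<equiv> Xg eps I g p" and "N \<equiv> Nmult eps a1 a2 a3 i1 i2 g"
  defines "N' \<equiv> Nmult_deriv eps g X"
  assumes eps: "eps \<noteq> 0" and inertia: "\<And>x y. I (wedge x y) = wedge (Amat *v x) (Amat *v y)"
    and g: "g \<bullet> g = 1" "g \<bullet> p = 0" and W: "g \<bullet> W1 = 0" "W1 \<bullet> (N *\<^sub>R p) + g \<bullet> W2 = 0"
  shows "((\<lambda>r. hstar eps a1 a2 a3 i1 i2 (g + r *\<^sub>R W1) (N *\<^sub>R p + r *\<^sub>R W2)) has_real_derivative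
           - twisted_form eps k12 a1 a2 a3 i1 i2 g
               (X /\<^sub>R N, (N *\<^sub>R pdot_red eps I (kappa k12 i1 i2) g p + N' *\<^sub>R p) /\<^sub>R N) (W1, W2))
         (at 0)"
proof -
  let ?M = "matrix_inv Amat"
  define a where "a = \<A> g"
  define u where "u = a powr (1 / (2 * eps))"
  have a: "a > 0" using calA_pos[OF g(1)] by (simp add: a_def)
  have "u > 0" using a by (simp add: u_def)
  have "a powr (1 / eps) = u^2"
    by (simp add: u_def power2_eq_square flip: powr_add)
  then have powers: "a powr (- 1 / eps) = 1 / u^2" "a powr (1 - 1 / eps) = a / u^2"
    using a by (simp_all add: powr_minus_divide powr_diff)
  have N: "N = eps * u / a"
    using a by (simp add: N_def Nmult_def u_def powr_diff flip: a_def)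
  have "((\<lambda>r. hstar eps a1 a2 a3 i1 i2 (g + r *\<^sub>R W1) (N *\<^sub>R p + r *\<^sub>R W2)) has_real_derivative
          (1 - 1 / eps) * a powr (- 1 / eps) * ((Amat *v g) \<bullet> W1)
            * (N^2 * (p \<bullet> (?M *v p))) + a powr (1 - 1 / eps) * (N * (W2 \<bullet> (?M *v p)))) (at 0)"
    using hstar_line_derivative[OF calA_pos[OF g(1)], of eps W1 "N *\<^sub>R p" W2] W(1)
    by (simp add: a_def matrix_vector_mult_scaleR power2_eq_square mult.assoc)
  also have "(1 - 1 / eps) * a powr (- 1 / eps) * ((Amat *v g) \<bullet> W1)
               * (N^2 * (p \<bullet> (?M *v p))) + a powr (1 - 1 / eps) * (N * (W2 \<bullet> (?M *v p)))
      = (eps - 1) * eps * ((Amat *v g) \<bullet> W1) * (p \<bullet> (?M *v p)) / a^2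
        + eps^2 * (W2 \<bullet> (?M *v p)) / (a * N)"
    unfolding powers N using a \<open>u > 0\<close> eps by (simp add: field_simps power2_eq_square)
  also have "\<dots> = - twisted_form eps k12 a1 a2 a3 i1 i2 g
               (X /\<^sub>R N, (N *\<^sub>R pdot_red eps I (kappa k12 i1 i2) g p + N' *\<^sub>R p) /\<^sub>R N) (W1, W2)"
    unfolding a_def X_def N_def N'_def
    by (rule neg_twisted_form_reduced_field[OF eps inertia g W[unfolded N_def], symmetric])
  finally show ?thesis .
qed

lemma reduced_flow_is_hamiltonian_in_new_variables:
  assumes eps: "eps \<noteq> 0" and inertia: "\<And>x y. I (wedge x y) = wedge (Amat *v x) (Amat *v y)"
    and J: "open J" "is_interval J" and t: "t \<in> J"
    and onT: "\<forall>s\<in>J. (\<gamma> s, p s) \<in> TstarS"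
    and eq_g: "\<forall>s\<in>J. (\<gamma> has_vector_derivative Xg eps I (\<gamma> s) (p s)) (at s)"
    and eq_p: "\<forall>s\<in>J. (p has_vector_derivative pdot_red eps I (kappa k12 i1 i2) (\<gamma> s) (p s)) (at s)"
    and time: "\<forall>s\<in>J. (\<tau> has_real_derivative Nmult eps a1 a2 a3 i1 i2 (\<gamma> s)) (at s)"
    and newvars: "\<forall>s\<in>J. G (\<tau> s) = \<gamma> s \<and> P (\<tau> s) = Nmult eps a1 a2 a3 i1 i2 (\<gamma> s) *\<^sub>R p s"
  shows "G differentiable (at (\<tau> t)) \<and> P differentiable (at (\<tau> t)) \<and>
           (\<forall>W \<in> tangent_TstarS (G (\<tau> t)) (P (\<tau> t)).
              ((\<lambda>r. hstar eps a1 a2 a3 i1 i2 (G (\<tau> t) + r *\<^sub>R fst W) (P (\<tau> t) + r *\<^sub>R snd W))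
                 has_real_derivative
                 - twisted_form eps k12 a1 a2 a3 i1 i2 (G (\<tau> t))
                     (vector_derivative G (at (\<tau> t)), vector_derivative P (at (\<tau> t))) W)
              (at 0))"
proof -
  define N where "N s = Nmult eps a1 a2 a3 i1 i2 (\<gamma> s)" for s
  define X where "X = Xg eps I (\<gamma> t) (p t)"
  define N' where "N' = Nmult_deriv eps (\<gamma> t) X"
  define pd where "pd = pdot_red eps I (kappa k12 i1 i2) (\<gamma> t) (p t)"
  have sphere: "\<gamma> s \<bullet> \<gamma> s = 1" "\<gamma> s \<bullet> p s = 0" if "s \<in> J" for s
    using onT that by (auto simp: TstarS_def)
  have N_ne: "N s \<noteq> 0" if "s \<in> J" for s
    using Nmult_ne_zero[OF eps sphere(1)[OF that]] by (simp add: N_def)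
  have \<gamma>': "(\<gamma> has_vector_derivative X) (at t)"
    using eq_g t by (simp add: X_def)
  have "(N has_real_derivative N') (at t)"
    unfolding N_def N'_def
    by (rule Nmult_has_real_derivative[OF \<gamma>' sphere(1)[OF t]])
      (simp add: X_def inner_Xg_Amat[OF eps inertia sphere[OF t]])
  then have "((\<lambda>s. N s *\<^sub>R p s) has_vector_derivative N t *\<^sub>R pd + N' *\<^sub>R p t) (at t)"
    using eq_p t by (auto intro: has_vector_derivative_scaleR simp: pd_def)
  then have P': "(P has_vector_derivative (N t *\<^sub>R pd + N' *\<^sub>R p t) /\<^sub>R N t) (at (\<tau> t))"
    using has_vector_derivative_reparametrization[OF J t, of \<tau> N P] time N_ne newvars
    by (simp add: N_def)
  have G': "(G has_vector_derivative X /\<^sub>R N t) (at (\<tau> t))"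
    using has_vector_derivative_reparametrization[OF J t, of \<tau> N G, OF _ _ _ \<gamma>'] time N_ne newvars
    by (simp add: N_def)
  have at_t: "G (\<tau> t) = \<gamma> t" "P (\<tau> t) = N t *\<^sub>R p t"
    using newvars t by (simp_all add: N_def)
  show ?thesis
  proof (intro conjI ballI)
    show "G differentiable (at (\<tau> t))" "P differentiable (at (\<tau> t))"
      using G' P' by (auto intro: differentiableI_vector)
  next
    fix W assume "W \<in> tangent_TstarS (G (\<tau> t)) (P (\<tau> t))"
    then show "((\<lambda>r. hstar eps a1 a2 a3 i1 i2 (G (\<tau> t) + r *\<^sub>R fst W) (P (\<tau> t) + r *\<^sub>R snd W))
                 has_real_derivative
                 - twisted_form eps k12 a1 a2 a3 i1 i2 (G (\<tau> t))
                     (vector_derivative G (at (\<tau> t)), vector_derivative P (at (\<tau> t))) W) (at 0)"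
      unfolding vector_derivative_at[OF G'] vector_derivative_at[OF P'] at_t X_def pd_def N'_def N_def
      using hstar_derivative_eq_neg_twisted_form[OF eps inertia sphere[OF t]]
      by (cases W) (simp add: tangent_TstarS_def)
  qed
qed

end

theorem theorem8p2:
  fixes a b eps k12 a1 a2 a3 :: real
    and i1 i2 :: "'n::finite"
    and I :: "real^'n^'n \<Rightarrow> real^'n^'n"
    and J :: "real set"
    and \<gamma> p G P :: "real \<Rightarrow> real^'n"
    and \<tau> :: "real \<Rightarrow> real"
  assumes n3: "CARD('n) \<ge> 3"
    and i12: "i1 \<noteq> i2"
    and ab: "a > 0" "b > 0"
    and eps: "eps = b / (b + a) \<or> (b \<noteq> a \<and> eps = b / (b - a))"
    and apos: "a1 > 0" "a2 > 0" "a3 > 0"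
    and inertia: "\<forall>x y. I (wedge x y)
                    = wedge (diagA a1 a2 a3 i1 i2 *v x) (diagA a1 a2 a3 i1 i2 *v y)"
    and J: "open J" "is_interval J"
    and onT: "\<forall>t\<in>J. (\<gamma> t, p t) \<in> TstarS"
    and eq_g: "\<forall>t\<in>J. (\<gamma> has_vector_derivative Xg eps I (\<gamma> t) (p t)) (at t)"
    and eq_p: "\<forall>t\<in>J. (p has_vector_derivative
                   pdot_red eps I (kappa k12 i1 i2) (\<gamma> t) (p t)) (at t)"
    and time: "\<forall>t\<in>J. (\<tau> has_real_derivative Nmult eps a1 a2 a3 i1 i2 (\<gamma> t)) (at t)"
    and newvars: "\<forall>t\<in>J. G (\<tau> t) = \<gamma> t \<and> P (\<tau> t) = Nmult eps a1 a2 a3 i1 i2 (\<gamma> t) *\<^sub>R p t"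
  shows "(\<forall>t\<in>J. G differentiable (at (\<tau> t)) \<and> P differentiable (at (\<tau> t)) \<and>
            (\<forall>W \<in> tangent_TstarS (G (\<tau> t)) (P (\<tau> t)).
               ((\<lambda>r. hstar eps a1 a2 a3 i1 i2 (G (\<tau> t) + r *\<^sub>R fst W) (P (\<tau> t) + r *\<^sub>R snd W))
                  has_real_derivative
                  - twisted_form eps k12 a1 a2 a3 i1 i2 (G (\<tau> t))
                      (vector_derivative G (at (\<tau> t)), vector_derivative P (at (\<tau> t))) W)
               (at 0)))
       \<and> (\<forall>g v q. g \<bullet> g = 1 \<longrightarrow> g \<bullet> v = 0 \<longrightarrow> q \<bullet> g = 0 \<longrightarrow>
            (\<forall>w. w \<bullet> g = 0 \<longrightarrow> q \<bullet> w = metric eps (diagA a1 a2 a3 i1 i2) g v w) \<longrightarrow>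
            hstar eps a1 a2 a3 i1 i2 g q = metric eps (diagA a1 a2 a3 i1 i2) g v v / 2)"
proof -
  interpret diag_inertia a1 a2 a3 i1 i2
    using i12 apos by unfold_locales
  have "eps \<noteq> 0"
    using eps ab by auto
  then show ?thesis
    using reduced_flow_is_hamiltonian_in_new_variables[OF _ inertia[rule_format] J _ onT eq_g eq_p
        time newvars] hstar_eq_half_metric
    by blast
qed

end
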